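(* Let $\mathfrak F$ be a Frankenstein graph and let $\mathsf P\subseteq\mathfrak F$ be a path with terminals $s$ and $t$. Then there exists a rainbow path $\mathsf P'\subseteq\mathfrak F$ with terminals $s$ and $t$.
   Context: A (colored) graph is a finite set $\mathsf G$ of pairs $(e,\alpha)$, where the $e$'s are pairwise distinct 2-element subsets of a vertex set and $\alpha$ is a color (colors may repeat). $V(\mathsf G)$ is its vertex set and $\chi(\mathsf G)$ its set of colors; $\mathsf G$ is rainbow if $|\chi(\mathsf G)|=|\mathsf G|$ and almost rainbow if $|\chi(\mathsf G)|=|\mathsf G|-1$. A subgraph is a subset. Paths, cycles, trees are colored graphs whose underlying uncolored edges form a path (two distinct terminals), cycle, or tree; lengths count edges. A long rainbow odd cycle is a rainbow cycle of odd length at least $7$. A theta graph is a union $\mathsf P_1\cup\mathsf P_2\cup\mathsf P_3$ of three paths with the same terminals $s\neq t$ such that any two share no vertex other than $s,t$ and no underlying uncolored edge. A bad piece is an almost rainbow theta graph with at least $6$ vertices that is the union of three rainbow paths as in the definition of a theta graph. A partition of a graph $\mathsf G$ is a collection $\{\mathsf G_1,\dots,\mathsf G_m\}$ of graphs with $\mathsf G=\bigcup_i\mathsf G_i$ and, for $i\ne j$, $|V(\mathsf G_i)\cap V(\mathsf G_j)|\le 1$ and $\chi(\mathsf G_i)\cap\chi(\mathsf G_j)=\emptyset$; its members are called parts. A Frankenstein graph is a graph $\mathfrak F$ together with a partition $\{\mathsf C_1,\dots,\mathsf C_c,\mathsf B_1,\dots,\mathsf B_b,\mathsf T_1,\dots,\mathsf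 T_t\}$ ($c,b,t\ge0$, $c+b+t\ge1$) in which the $\mathsf C_i$ are long rainbow odd cycles, the $\mathsf B_i$ are bad pieces and the $\mathsf T_i$ are rainbow trees, such that (F1) $V(\mathsf T_p)\cap V(\mathsf T_q)=\emptyset$ for $p\neq q$, and (F2) no subgraph of $\mathfrak F$ is a rainbow even cycle. *)

theory Defs
  imports Main
begin

type_synonym ('v, 'c) cgraph = "('v set \<times> 'c) set"

definition colored_graph :: "('v, 'c) cgraph \<Rightarrow> bool" where
  "colored_graph G \<longleftrightarrow> finite G \<and> (\<forall>e\<in>fst ` G. card e = 2) \<and> inj_on fst G"

definition verts :: "('v, 'c) cgraph \<Rightarrow> 'v set" where
  "verts G = \<Union> (fst ` G)"

definition colors :: "('v, 'c) cgraph \<Rightarrow> 'c set" where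
  "colors G = snd ` G"

definition rainbow :: "('v, 'c) cgraph \<Rightarrow> bool" where
  "rainbow G \<longleftrightarrow> card (colors G) = card G"

definition almost_rainbow :: "('v, 'c) cgraph \<Rightarrow> bool" where
  "almost_rainbow G \<longleftrightarrow> card (colors G) + 1 = card G"

definition is_path :: "('v, 'c) cgraph \<Rightarrow> 'v \<Rightarrow> 'v \<Rightarrow> bool" where
  "is_path G s t \<longleftrightarrow> colored_graph G \<and> s \<noteq> t \<and>
     (\<exists>vs. distinct vs \<and> length vs \<ge> 2 \<and> hd vs = s \<and> last vs = t \<and>
        fst ` G = {{vs ! i, vs ! Suc i} | i. Suc i < length vs})"

definition is_cycle :: "('v, 'c) cgraph \<Rightarrow> bool" where
  "is_cycle G \<longleftrightarrow> colored_graph G \<and>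
     (\<exists>vs. distinct vs \<and> length vs \<ge> 3 \<and>
        fst ` G = {{vs ! i, vs ! (Suc i mod length vs)} | i. i < length vs})"

definition connected_cg :: "('v, 'c) cgraph \<Rightarrow> bool" where
  "connected_cg G \<longleftrightarrow> (\<forall>u\<in>verts G. \<forall>v\<in>verts G. u \<noteq> v \<longrightarrow> (\<exists>P\<subseteq>G. is_path P u v))"

definition is_tree :: "('v, 'c) cgraph \<Rightarrow> bool" where
  "is_tree G \<longleftrightarrow> colored_graph G \<and> G \<noteq> {} \<and> connected_cg G \<and> \<not> (\<exists>C\<subseteq>G. is_cycle C)"

definition long_rainbow_odd_cycle :: "('v, 'c) cgraph \<Rightarrow> bool" where
  "long_rainbow_odd_cycle G \<longleftrightarrow> is_cycle G \<and> rainbow G \<and> odd (card G) \<and> card G \<ge> 7"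

definition theta_paths :: "('v, 'c) cgraph \<Rightarrow> ('v, 'c) cgraph \<Rightarrow> ('v, 'c) cgraph \<Rightarrow> 'v \<Rightarrow> 'v \<Rightarrow> bool" where
  "theta_paths P1 P2 P3 s t \<longleftrightarrow> is_path P1 s t \<and> is_path P2 s t \<and> is_path P3 s t \<and>
     verts P1 \<inter> verts P2 \<subseteq> {s, t} \<and> verts P1 \<inter> verts P3 \<subseteq> {s, t} \<and>
     verts P2 \<inter> verts P3 \<subseteq> {s, t} \<and>
     fst ` P1 \<inter> fst ` P2 = {} \<and> fst ` P1 \<inter> fst ` P3 = {} \<and> fst ` P2 \<inter> fst ` P3 = {}"

definition is_theta :: "('v, 'c) cgraph \<Rightarrow> bool" where
  "is_theta G \<longleftrightarrow> (\<exists>P1 P2 P3 s t. theta_paths P1 P2 P3 s t \<and> G = P1 \<union> P2 \<union> P3)"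

definition bad_piece :: "('v, 'c) cgraph \<Rightarrow> bool" where
  "bad_piece B \<longleftrightarrow> almost_rainbow B \<and> card (verts B) \<ge> 6 \<and>
     (\<exists>P1 P2 P3 s t. theta_paths P1 P2 P3 s t \<and> B = P1 \<union> P2 \<union> P3 \<and>
        rainbow P1 \<and> rainbow P2 \<and> rainbow P3)"

definition is_partition :: "('v, 'c) cgraph \<Rightarrow> ('v, 'c) cgraph list \<Rightarrow> bool" where
  "is_partition G Gs \<longleftrightarrow> G = \<Union> (set Gs) \<and>
     (\<forall>i<length Gs. \<forall>j<length Gs. i \<noteq> j \<longrightarrow>
        card (verts (Gs ! i) \<inter> verts (Gs ! j)) \<le> 1 \<and> colors (Gs ! i) \<inter> colors (Gs ! j) = {})"

definition frankenstein ::
  "('v, 'c) cgraph \<Rightarrow> ('v, 'c) cgraph list \<Rightarrow> ('v, 'c) cgraph list \<Rightarrow> ('v, 'c) cgraph list \<Rightarrow> bool" where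
  "frankenstein F Cs Bs Ts \<longleftrightarrow> colored_graph F \<and>
     is_partition F (Cs @ Bs @ Ts) \<and> Cs @ Bs @ Ts \<noteq> [] \<and>
     (\<forall>C\<in>set Cs. long_rainbow_odd_cycle C) \<and>
     (\<forall>B\<in>set Bs. bad_piece B) \<and>
     (\<forall>T\<in>set Ts. is_tree T \<and> rainbow T) \<and>
     (\<forall>p<length Ts. \<forall>q<length Ts. p \<noteq> q \<longrightarrow> verts (Ts ! p) \<inter> verts (Ts ! q) = {}) \<and>
     \<not> (\<exists>H\<subseteq>F. is_cycle H \<and> rainbow H \<and> even (card H))"

end

theory Submission
  imports Defs "HOL-Library.Transitive_Closure_Table"
begin

text \<open>A bad piece is almost rainbow, so deleting one edge of its repeated colour makes it
  rainbow; as every edge of a theta graph lies on a cycle formed by two of its three paths, the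
  deletion keeps the ends of every edge of the piece connected. Cycles and trees are rainbow already,
  and distinct parts use disjoint colours, so after these deletions the whole graph is rainbow and
  has the same connected components as the Frankenstein graph. An \<open>s\<close>--\<open>t\<close> path in what
  remains is the required rainbow path.\<close>

definition adj :: "('v, 'c) cgraph \<Rightarrow> 'v \<Rightarrow> 'v \<Rightarrow> bool" where
  "adj G u v \<longleftrightarrow> (\<exists>c. ({u, v}, c) \<in> G)"

lemma adj_mono: "G \<subseteq> H \<Longrightarrow> adj G \<le> adj H"
  unfolding adj_def by blast

lemma symp_adj: "symp (adj G)"
  by (rule sympI) (auto simp: adj_def insert_commute)

lemma rtranclp_adj_sym: "(adj G)\<^sup>*\<^sup>* u v \<Longrightarrow> (adj G)\<^sup>*\<^sup>* v u"
  by (rule sympD[OF symp_rtranclp[OF symp_adj]])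

lemma rtranclp_nth_segment:
  assumes "\<And>k. i \<le> k \<Longrightarrow> k < j \<Longrightarrow> r (vs ! k) (vs ! Suc k)" and "i \<le> j"
  shows "r\<^sup>*\<^sup>* (vs ! i) (vs ! j)"
  using assms
proof (induction j)
  case (Suc j)
  then show ?case
    by (cases "i = Suc j") (auto intro: rtranclp.rtrancl_into_rtrancl)
qed simp

lemma colored_graph_subset: "colored_graph G \<Longrightarrow> H \<subseteq> G \<Longrightarrow> colored_graph H"
  unfolding colored_graph_def by (auto intro: finite_subset inj_on_subset)

lemma rainbow_iff_inj_on_snd: "finite G \<Longrightarrow> rainbow G \<longleftrightarrow> inj_on snd G"
  unfolding rainbow_def colors_def by (simp add: inj_on_iff_eq_card)

lemma is_pathE:
  assumes "is_path P s t"
  obtains vs where "distinct vs" "length vs \<ge> 2" "vs ! 0 = s" "vs ! (length vs - 1) = t"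
    "fst ` P = {{vs ! i, vs ! Suc i} | i. Suc i < length vs}"
proof -
  obtain vs where vs: "distinct vs" "length vs \<ge> 2" "hd vs = s" "last vs = t"
    "fst ` P = {{vs ! i, vs ! Suc i} | i. Suc i < length vs}"
    using assms unfolding is_path_def by blast
  then have "vs \<noteq> []" by auto
  with vs show thesis
    using that by (simp add: hd_conv_nth last_conv_nth)
qed

lemma path_edge_nth:
  assumes "fst ` P = {{vs ! i, vs ! Suc i} | i. Suc i < length vs}" and "Suc k < length vs"
  obtains c where "({vs ! k, vs ! Suc k}, c) \<in> P"
proof -
  have "{vs ! k, vs ! Suc k} \<in> fst ` P"
    using assms by blast
  then show thesis
    using that by force
qed

lemma is_path_connects: "is_path P s t \<Longrightarrow> (adj P)\<^sup>*\<^sup>* s t"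
proof (elim is_pathE)
  fix vs assume vs: "fst ` P = {{vs ! i, vs ! Suc i} | i. Suc i < length vs}"
    and "vs ! 0 = s" "vs ! (length vs - 1) = t"
  moreover have "(adj P)\<^sup>*\<^sup>* (vs ! 0) (vs ! (length vs - 1))"
  proof (rule rtranclp_nth_segment)
    fix k assume "k < length vs - 1"
    then have "Suc k < length vs"
      by linarith
    then obtain c where "({vs ! k, vs ! Suc k}, c) \<in> P"
      by (rule path_edge_nth[OF vs])
    then show "adj P (vs ! k) (vs ! Suc k)"
      unfolding adj_def by blast
  qed simp
  ultimately show ?thesis by simp
qed

lemma distinct_nth_doubleton_eq:
  assumes "distinct vs" "Suc k < length vs" "Suc m < length vs"
    and "{vs ! k, vs ! Suc k} = {vs ! m, vs ! Suc m}"
  shows "k = m"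
  using assms by (auto simp: doubleton_eq_iff nth_eq_iff_index_eq)

lemma path_edge_detour:
  assumes P: "is_path P s t" and x: "x \<in> P" "fst x = {u, v}"
    and G: "P - {x} \<subseteq> G" "(adj G)\<^sup>*\<^sup>* s t"
  shows "(adj G)\<^sup>*\<^sup>* u v"
proof -
  obtain vs where vs: "distinct vs" "vs ! 0 = s" "vs ! (length vs - 1) = t"
    and edges: "fst ` P = {{vs ! i, vs ! Suc i} | i. Suc i < length vs}"
    using P by (rule is_pathE)
  obtain m where m: "Suc m < length vs" "fst x = {vs ! m, vs ! Suc m}"
    using x(1) edges by blast
  have other_edge: "adj G (vs ! k) (vs ! Suc k)" if k: "Suc k < length vs" "k \<noteq> m" for k
  proof -
    obtain c where c: "({vs ! k, vs ! Suc k}, c) \<in> P"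
      using path_edge_nth[OF edges k(1)] .
    moreover have "({vs ! k, vs ! Suc k}, c) \<noteq> x"
    proof
      assume "({vs ! k, vs ! Suc k}, c) = x"
      then have "{vs ! k, vs ! Suc k} = {vs ! m, vs ! Suc m}"
        using m(2) by (metis fst_conv)
      then show False
        using distinct_nth_doubleton_eq[OF vs(1) k(1) m(1)] k(2) by blast
    qed
    ultimately show ?thesis
      using G(1) unfolding adj_def by blast
  qed
  have "(adj G)\<^sup>*\<^sup>* (vs ! 0) (vs ! m)"
    by (rule rtranclp_nth_segment) (use m(1) in \<open>auto intro: other_edge\<close>)
  moreover have "(adj G)\<^sup>*\<^sup>* (vs ! Suc m) (vs ! (length vs - 1))"
    by (rule rtranclp_nth_segment) (use m(1) in \<open>auto intro: other_edge\<close>)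
  ultimately have "(adj G)\<^sup>*\<^sup>* (vs ! m) (vs ! Suc m)"
    using G(2) vs(2,3) by (metis rtranclp_adj_sym rtranclp_trans)
  moreover have "(u = vs ! m \<and> v = vs ! Suc m) \<or> (u = vs ! Suc m \<and> v = vs ! m)"
    using x(2) m(2) by (metis doubleton_eq_iff)
  ultimately show ?thesis
    by (metis rtranclp_adj_sym)
qed

lemma rtranclp_adj_imp_path:
  assumes st: "(adj G)\<^sup>*\<^sup>* s t" "s \<noteq> t" and G: "colored_graph G"
  shows "\<exists>P\<subseteq>G. is_path P s t"
proof -
  obtain ys where "rtrancl_path (adj G) s ys t"
    using st(1) by (auto simp: rtranclp_eq_rtrancl_path)
  then obtain xs where xs: "rtrancl_path (adj G) s xs t" "distinct (s # xs)"
    by (rule rtrancl_path_distinct)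
  have "xs \<noteq> []"
    using xs(1) st(2) by (auto elim: rtrancl_path.cases)
  define vs where "vs = s # xs"
  have walk: "adj G (vs ! i) (vs ! Suc i)" if "Suc i < length vs" for i
    using rtrancl_path_nth[OF xs(1), of i] that by (simp add: vs_def)
  have vs: "distinct vs" "length vs \<ge> 2" "hd vs = s" "last vs = t"
    using xs rtrancl_path_last[OF xs(1)] \<open>xs \<noteq> []\<close> by (auto simp: vs_def Suc_le_eq)
  define E where "E = {{vs ! i, vs ! Suc i} | i. Suc i < length vs}"
  define P where "P = {y \<in> G. fst y \<in> E}"
  have "E \<subseteq> fst ` P"
  proof
    fix e assume "e \<in> E"
    then obtain i where "Suc i < length vs" "e = {vs ! i, vs ! Suc i}"
      unfolding E_def by blast
    then obtain c where "(e, c) \<in> G"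
      using walk unfolding adj_def by blast
    with \<open>e \<in> E\<close> show "e \<in> fst ` P"
      unfolding P_def by force
  qed
  then have "fst ` P = E"
    unfolding P_def by blast
  moreover have "P \<subseteq> G"
    unfolding P_def by blast
  ultimately have "is_path P s t"
    unfolding is_path_def E_def using vs st(2) colored_graph_subset[OF G] by blast
  with \<open>P \<subseteq> G\<close> show ?thesis
    by blast
qed

lemma edge_disjoint_paths_delete_edge:
  assumes "is_path P s t" "is_path Q s t" "fst ` P \<inter> fst ` Q = {}" "P \<union> Q \<subseteq> G"
    and "x \<in> P" "fst x = {u, v}"
  shows "(adj (G - {x}))\<^sup>*\<^sup>* u v"
proof (rule path_edge_detour[OF assms(1,5,6)])
  show "P - {x} \<subseteq> G - {x}"
    using assms(4) by blast
  have "Q \<subseteq> G - {x}"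
    using assms(3-5) by blast
  then show "(adj (G - {x}))\<^sup>*\<^sup>* s t"
    using is_path_connects[OF assms(2)] rtranclp_mono[OF adj_mono] by blast
qed

lemma theta_delete_edge_connected:
  assumes "theta_paths P1 P2 P3 s t" "x \<in> P1 \<union> P2 \<union> P3"
  shows "adj (P1 \<union> P2 \<union> P3) \<le> (adj (P1 \<union> P2 \<union> P3 - {x}))\<^sup>*\<^sup>*"
proof (intro predicate2I)
  let ?G = "P1 \<union> P2 \<union> P3"
  fix u v assume "adj ?G u v"
  then obtain c where c: "({u, v}, c) \<in> ?G"
    unfolding adj_def by blast
  show "(adj (?G - {x}))\<^sup>*\<^sup>* u v"
  proof (cases "x = ({u, v}, c)")
    case True
    then have x: "fst x = {u, v}"
      by simp
    have p: "is_path P1 s t" "is_path P2 s t" "is_path P3 s t"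
      and d: "fst ` P1 \<inter> fst ` P2 = {}" "fst ` P1 \<inter> fst ` P3 = {}" "fst ` P2 \<inter> fst ` P3 = {}"
      using assms(1) unfolding theta_paths_def by simp_all
    from assms(2) consider "x \<in> P1" | "x \<in> P2" | "x \<in> P3"
      by blast
    then show ?thesis
    proof cases
      case 1
      show ?thesis
        by (rule edge_disjoint_paths_delete_edge[OF p(1,2) d(1) _ 1 x]) blast
    next
      case 2
      show ?thesis
        by (rule edge_disjoint_paths_delete_edge[OF p(2,3) d(3) _ 2 x]) blast
    next
      case 3
      have "fst ` P3 \<inter> fst ` P1 = {}"
        using d(2) by blast
      then show ?thesis
        by (rule edge_disjoint_paths_delete_edge[OF p(3,1) _ _ 3 x]) blast
    qed
  next
    case False
    then show ?thesis
      using c unfolding adj_def by blast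
  qed
qed

lemma almost_rainbow_delete_edge:
  assumes "finite B" "almost_rainbow B"
  obtains x where "x \<in> B" "inj_on snd (B - {x})"
proof -
  have card: "card (snd ` B) + 1 = card B"
    using assms(2) unfolding almost_rainbow_def colors_def .
  then obtain x y where xy: "x \<in> B" "y \<in> B" "x \<noteq> y" "snd x = snd y"
    by (metis card_image inj_onI n_not_Suc_n Suc_eq_plus1)
  then have "snd ` (B - {x}) = snd ` B"
    by (auto simp: image_iff)
  moreover have "card (B - {x}) = card B - 1"
    using xy(1) assms(1) by simp
  ultimately have "inj_on snd (B - {x})"
    using card assms(1) by (simp add: inj_on_iff_eq_card)
  with xy(1) show thesis by (rule that)
qed

definition rainbow_reduct :: "('v, 'c) cgraph \<Rightarrow> ('v, 'c) cgraph \<Rightarrow> bool" where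
  "rainbow_reduct G H \<longleftrightarrow> H \<subseteq> G \<and> inj_on snd H \<and> adj G \<le> (adj H)\<^sup>*\<^sup>*"

lemma rainbow_reduct_self: "finite G \<Longrightarrow> rainbow G \<Longrightarrow> rainbow_reduct G G"
  unfolding rainbow_reduct_def by (auto simp: rainbow_iff_inj_on_snd)

lemma bad_piece_rainbow_reduct:
  assumes "finite B" "bad_piece B"
  obtains H where "rainbow_reduct B H"
proof -
  obtain P1 P2 P3 s t where theta: "theta_paths P1 P2 P3 s t" "B = P1 \<union> P2 \<union> P3"
    using assms(2) unfolding bad_piece_def by blast
  have "almost_rainbow B"
    using assms(2) unfolding bad_piece_def by blast
  with assms(1) obtain x where x: "x \<in> B" "inj_on snd (B - {x})"
    by (rule almost_rainbow_delete_edge)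
  have "adj B \<le> (adj (B - {x}))\<^sup>*\<^sup>*"
    using theta_delete_edge_connected[OF theta(1)] x(1) theta(2) by simp
  with x(2) have "rainbow_reduct B (B - {x})"
    unfolding rainbow_reduct_def by blast
  then show thesis
    by (rule that)
qed

lemma inj_on_snd_UN_colors_disjoint:
  assumes "\<And>G H. G \<in> \<G> \<Longrightarrow> H \<in> \<G> \<Longrightarrow> G \<noteq> H \<Longrightarrow> colors G \<inter> colors H = {}"
    and "\<And>G. G \<in> \<G> \<Longrightarrow> S G \<subseteq> G" "\<And>G. G \<in> \<G> \<Longrightarrow> inj_on snd (S G)"
  shows "inj_on snd (\<Union>G\<in>\<G>. S G)"
proof (rule inj_onI)
  fix a b assume "a \<in> (\<Union>G\<in>\<G>. S G)" "b \<in> (\<Union>G\<in>\<G>. S G)" and ab: "snd a = snd b"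
  then obtain G H where GH: "G \<in> \<G>" "a \<in> S G" "H \<in> \<G>" "b \<in> S H"
    by blast
  have "snd a \<in> colors G \<inter> colors H"
    using GH assms(2) ab unfolding colors_def by blast
  then have "G = H"
    using assms(1) GH by blast
  then show "a = b"
    using GH assms(3) ab by (blast dest: inj_onD)
qed

lemma rainbow_path_if_parts_have_rainbow_reducts:
  fixes F :: "('v, 'c) cgraph"
  assumes F: "colored_graph F" "F = \<Union>\<G>"
    and colors: "\<And>G H. G \<in> \<G> \<Longrightarrow> H \<in> \<G> \<Longrightarrow> G \<noteq> H \<Longrightarrow> colors G \<inter> colors H = {}"
    and reducts: "\<And>G. G \<in> \<G> \<Longrightarrow> \<exists>H. rainbow_reduct G H"
    and st: "(adj F)\<^sup>*\<^sup>* s t" "s \<noteq> t"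
  shows "\<exists>P\<subseteq>F. is_path P s t \<and> rainbow P"
proof -
  define S :: "('v, 'c) cgraph \<Rightarrow> ('v, 'c) cgraph" where "S G = (SOME H. rainbow_reduct G H)" for G
  have S: "S G \<subseteq> G" "inj_on snd (S G)" "adj G \<le> (adj (S G))\<^sup>*\<^sup>*" if "G \<in> \<G>" for G
    using someI_ex[OF reducts[OF that]] unfolding S_def rainbow_reduct_def by blast+
  define F' where "F' = (\<Union>G\<in>\<G>. S G)"
  have "F' \<subseteq> F"
    using S(1) F(2) unfolding F'_def by blast
  have "inj_on snd F'"
    unfolding F'_def by (rule inj_on_snd_UN_colors_disjoint[OF colors S(1,2)])
  have "adj F \<le> (adj F')\<^sup>*\<^sup>*"
  proof (intro predicate2I)
    fix u v assume "adj F u v"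
    then obtain G where G: "G \<in> \<G>" "adj G u v"
      using F(2) unfolding adj_def by blast
    then have "(adj (S G))\<^sup>*\<^sup>* u v"
      using S(3) by blast
    moreover have "S G \<subseteq> F'"
      using G(1) unfolding F'_def by blast
    ultimately show "(adj F')\<^sup>*\<^sup>* u v"
      using rtranclp_mono[OF adj_mono] by blast
  qed
  then have "(adj F')\<^sup>*\<^sup>* s t"
    using rtranclp_mono[of "adj F" "(adj F')\<^sup>*\<^sup>*"] st(1) by auto
  then obtain P where P: "P \<subseteq> F'" "is_path P s t"
    using rtranclp_adj_imp_path st(2) colored_graph_subset[OF F(1) \<open>F' \<subseteq> F\<close>] by meson
  then have "finite P"
    unfolding is_path_def colored_graph_def by blast
  then have "rainbow P"
    using inj_on_subset[OF \<open>inj_on snd F'\<close> P(1)] by (simp add: rainbow_iff_inj_on_snd)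
  with P \<open>F' \<subseteq> F\<close> show ?thesis
    by blast
qed

lemma is_partition_colors_disjoint:
  assumes "is_partition F Gs" "G \<in> set Gs" "H \<in> set Gs" "G \<noteq> H"
  shows "colors G \<inter> colors H = {}"
proof -
  obtain i j where "i < length Gs" "j < length Gs" "G = Gs ! i" "H = Gs ! j"
    using assms(2,3) by (auto simp: in_set_conv_nth)
  with assms(1,4) show ?thesis
    unfolding is_partition_def by blast
qed

theorem proposition2p9:
  fixes F :: "('v, 'c) cgraph" and Cs Bs Ts :: "('v, 'c) cgraph list"
    and P :: "('v, 'c) cgraph" and s t :: 'v
  assumes "frankenstein F Cs Bs Ts"
    and "P \<subseteq> F" and "is_path P s t"
  shows "\<exists>P'\<subseteq>F. is_path P' s t \<and> rainbow P'"
proof -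
  let ?parts = "Cs @ Bs @ Ts"
  have F: "colored_graph F" "is_partition F ?parts"
    using assms(1) unfolding frankenstein_def by simp_all
  have "\<exists>H. rainbow_reduct G H" if G: "G \<in> set ?parts" for G
  proof -
    have "finite G"
      using F G unfolding is_partition_def colored_graph_def by (auto intro: finite_subset)
    moreover have "rainbow G \<or> bad_piece G"
      using assms(1) G unfolding frankenstein_def long_rainbow_odd_cycle_def by auto
    ultimately show ?thesis
      by (metis rainbow_reduct_self bad_piece_rainbow_reduct)
  qed
  moreover have "(adj F)\<^sup>*\<^sup>* s t"
    using is_path_connects[OF assms(3)] rtranclp_mono[OF adj_mono[OF assms(2)]] by blast
  moreover have "s \<noteq> t"
    using assms(3) unfolding is_path_def by simp
  ultimately show ?thesis
    using rainbow_path_if_parts_have_rainbow_reducts[OF F(1) _ is_partition_colors_disjoint[OF F(2)]]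
      F(2) unfolding is_partition_def by blast
qed

end
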